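(* Let $t$ be the number of erroneous nodes in the distributed storage system built from the concatenation of an MRD code and an optimal repair MDS array code, as described in the context. If $2t\alpha+1\leq \delta$, then the original data can be recovered from any $k$ nodes.
   Context: A file of size $M=KN$ over $\mathbb{F}_q$ (with $K<N$) is arranged as an $N\times K$ matrix $\mathcal{M}$ over $\mathbb{F}_q$. Let $\mathcal{C}$ be an $[N\times m, NK, \delta=m-K+1]$ Gabidulin maximum rank distance (MRD) code with $m\leq N$, whose codewords are viewed as vectors in $\mathbb{F}_{q^N}^m$; let $\mathbf{c}_{\mathcal{M}}\in\mathbb{F}_{q^N}^m$ be the codeword corresponding to $\mathcal{M}$. Let $\alpha,k$ be positive integers with $m=\alpha k$, and set $Q=q^N$. Let $C$ be an $(n,k)$ optimal repair MDS array code of dimensions $\alpha\times n$ whose generator matrix (a $k\times n$ block matrix of $\alpha\times\alpha$ blocks) is over $\mathbb{F}_q$, and whose node repairs use $\mathbb{F}_q$-linear combinations of stored symbols; here an MDS array code means any $k$ nodes suffice to recover the encoded data, and optimal repair means a failed node can be repaired by downloading $\alpha d/(d-k+1)$ symbols from each node in any set of $d\ge k$ surviving nodes. The vector $\mathbf{c}_{\mathcal{M}}$ is split into $k$ blocks of size $\alpha$ and encoded with $C$ into $n$ nodes each storing $\alpha$ symbols of $\mathbb{F}_Q$. Errors are static: an adversary replaces the content of each of the $t$ affected nodes (adds an arbitrary error vector in $\mathbb{F}_Q^\alpha$) only once, and the affected node uses this same polluted content in all subsequent repair and data-collection processes; repairs are performed obliviously, so errors may propagate to repaired nodes. *)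

theory Defs
  imports Main
begin

text \<open>The big field F_Q (Q = q^N) is a finite field type 'f with CARD('f) = q^N;
  the subfield F_q is the fixed field of the Frobenius x \<mapsto> x^q.\<close>
definition Fq :: "nat \<Rightarrow> 'f::field set" where
  "Fq q = {x. x ^ q = x}"

definition Fq_indep :: "nat \<Rightarrow> nat \<Rightarrow> (nat \<Rightarrow> 'f::field) \<Rightarrow> bool" where
  "Fq_indep q m g \<longleftrightarrow>
     (\<forall>c. (\<forall>i<m. c i \<in> Fq q) \<and> (\<Sum>i<m. c i * g i) = 0 \<longrightarrow> (\<forall>i<m. c i = 0))"

definition gab_enc :: "nat \<Rightarrow> nat \<Rightarrow> (nat \<Rightarrow> 'f::field) \<Rightarrow> (nat \<Rightarrow> 'f) \<Rightarrow> nat \<Rightarrow> 'f" where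
  "gab_enc q K g u = (\<lambda>i. \<Sum>j<K. u j * g i ^ (q ^ j))"

text \<open>Array code encoding: data vector c in F_Q^{k alpha} (k blocks of size alpha),
  generator G of size (k alpha) x (n alpha); node j stores positions j*alpha..j*alpha+alpha-1.\<close>
definition arr_enc :: "nat \<Rightarrow> nat \<Rightarrow> (nat \<Rightarrow> nat \<Rightarrow> 'f::field) \<Rightarrow> (nat \<Rightarrow> 'f) \<Rightarrow> nat \<Rightarrow> nat \<Rightarrow> 'f" where
  "arr_enc \<alpha> k G c = (\<lambda>j a. \<Sum>r<k * \<alpha>. c r * G r (j * \<alpha> + a))"

definition MDS_array :: "nat \<Rightarrow> nat \<Rightarrow> nat \<Rightarrow> (nat \<Rightarrow> nat \<Rightarrow> 'f::field) \<Rightarrow> bool" where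
  "MDS_array n k \<alpha> G \<longleftrightarrow>
     (\<forall>S. S \<subseteq> {..<n} \<and> card S = k \<longrightarrow>
        (\<forall>c c'. (\<forall>j\<in>S. \<forall>a<\<alpha>. arr_enc \<alpha> k G c j a = arr_enc \<alpha> k G c' j a)
               \<longrightarrow> (\<forall>r<k * \<alpha>. c r = c' r)))"

text \<open>Output of a repair of node i from helper set D: helper h sends the beta symbols
  sum_b Sdl i D h l b * x h b (l < beta); the newcomer forms F_q-linear combinations
  of the received symbols with coefficients Rec i D h a l.\<close>
definition repair_out ::
  "nat \<Rightarrow> nat \<Rightarrow> (nat \<Rightarrow> nat set \<Rightarrow> nat \<Rightarrow> nat \<Rightarrow> nat \<Rightarrow> 'f::field)
   \<Rightarrow> (nat \<Rightarrow> nat set \<Rightarrow> nat \<Rightarrow> nat \<Rightarrow> nat \<Rightarrow> 'f) \<Rightarrow> nat \<Rightarrow> nat set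
   \<Rightarrow> (nat \<Rightarrow> nat \<Rightarrow> 'f) \<Rightarrow> nat \<Rightarrow> 'f" where
  "repair_out \<alpha> \<beta> Sdl Rec i D x =
     (\<lambda>a. \<Sum>h\<in>D. \<Sum>l<\<beta>. Rec i D h a l * (\<Sum>b<\<alpha>. Sdl i D h l b * x h b))"

definition opt_repair ::
  "nat \<Rightarrow> nat \<Rightarrow> nat \<Rightarrow> nat \<Rightarrow> nat \<Rightarrow> nat \<Rightarrow> (nat \<Rightarrow> nat \<Rightarrow> 'f::field)
   \<Rightarrow> (nat \<Rightarrow> nat set \<Rightarrow> nat \<Rightarrow> nat \<Rightarrow> nat \<Rightarrow> 'f)
   \<Rightarrow> (nat \<Rightarrow> nat set \<Rightarrow> nat \<Rightarrow> nat \<Rightarrow> nat \<Rightarrow> 'f) \<Rightarrow> bool" where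
  "opt_repair q n k \<alpha> d \<beta> G Sdl Rec \<longleftrightarrow>
     k \<le> d \<and> d < n \<and> \<beta> * (d - k + 1) = \<alpha> \<and>
     (\<forall>i D h l b. Sdl i D h l b \<in> Fq q) \<and> (\<forall>i D h a l. Rec i D h a l \<in> Fq q) \<and>
     (\<forall>c i D. i < n \<and> D \<subseteq> {..<n} - {i} \<and> card D = d \<longrightarrow>
        (\<forall>a<\<alpha>. repair_out \<alpha> \<beta> Sdl Rec i D (arr_enc \<alpha> k G c) a = arr_enc \<alpha> k G c i a))"

text \<open>Reachable system states (x = node contents, A = set of nodes hit by the adversary),
  starting from the correct contents x0. An adversary adds an arbitrary error vector
  to a node at most once; repairs are performed obliviously with the repair scheme.\<close>
inductive reach ::
  "nat \<Rightarrow> nat \<Rightarrow> nat \<Rightarrow> nat \<Rightarrow> (nat \<Rightarrow> nat set \<Rightarrow> nat \<Rightarrow> nat \<Rightarrow> nat \<Rightarrow> 'f::field)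
   \<Rightarrow> (nat \<Rightarrow> nat set \<Rightarrow> nat \<Rightarrow> nat \<Rightarrow> nat \<Rightarrow> 'f) \<Rightarrow> (nat \<Rightarrow> nat \<Rightarrow> 'f)
   \<Rightarrow> (nat \<Rightarrow> nat \<Rightarrow> 'f) \<Rightarrow> nat set \<Rightarrow> bool"
  for n d \<alpha> \<beta> Sdl Rec x0 where
  init: "reach n d \<alpha> \<beta> Sdl Rec x0 x0 {}"
| inject: "reach n d \<alpha> \<beta> Sdl Rec x0 x A \<Longrightarrow> j < n \<Longrightarrow> j \<notin> A \<Longrightarrow>
      reach n d \<alpha> \<beta> Sdl Rec x0 (x(j := (\<lambda>a. x j a + e a))) (insert j A)"
| repair: "reach n d \<alpha> \<beta> Sdl Rec x0 x A \<Longrightarrow> i < n \<Longrightarrow> D \<subseteq> {..<n} - {i} \<Longrightarrow>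
      card D = d \<Longrightarrow>
      reach n d \<alpha> \<beta> Sdl Rec x0 (x(i := repair_out \<alpha> \<beta> Sdl Rec i D x)) A"

end

theory Submission
  imports Defs "HOL-Algebra.Algebraic_Closure_Type" "HOL-Algebra.Sylow"
    "HOL-Computational_Algebra.Polynomial" "HOL-Library.FuncSet"
begin

text \<open>Errors injected into \<open>t\<close> nodes and spread by \<open>Fq\<close>-linear repairs leave every node equal
  to its correct content plus an \<open>Fq\<close>-combination of at most \<open>t * \<alpha>\<close> error symbols. If two
  messages produce the same contents on \<open>k\<close> nodes, the MDS property of the \<open>Fq\<close>-rational array
  code (a counting argument) puts all coordinates of the difference of their Gabidulin codewords
  into the \<open>Fq\<close>-span of at most \<open>2 * t * \<alpha> \<le> m - K\<close> symbols. A nonzero Gabidulin codeword has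
  rank at least \<open>m - K + 1\<close>, because a linearized polynomial of \<open>q\<close>-degree below \<open>K\<close> has at most
  \<open>q ^ (K - 1)\<close> roots; so the messages coincide and any consistent message is the right one.\<close>

section \<open>Finite fields\<close>

lemma prime_CHAR_finite_field: "prime CHAR('f::{finite,field})"
  by (rule prime_CHAR_semidom) (rule finite_imp_CHAR_pos, simp)

lemma nat_pow_additive_group:
  "(x :: 'a::ring_1) [^]\<^bsub>\<lparr>carrier = C, monoid.mult = (+), one = 0\<rparr>\<^esub> n = of_nat n * x"
  by (induction n) (simp_all add: algebra_simps)

lemma nat_pow_ring_of_type_algebra:
  "(x :: 'a::ring_1) [^]\<^bsub>ring_of_type_algebra\<^esub> n = x ^ n"
  by (induction n) (auto simp: ring_of_type_algebra_def power_commutes)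

lemma finite_field_power_card:
  "(x :: 'f::{finite,field}) ^ card (UNIV :: 'f set) = x"
proof (cases "x = 0")
  case False
  define R where "R = (ring_of_type_algebra :: 'f ring)"
  interpret field R unfolding R_def by rule
  have carrier: "carrier R = UNIV" and zero: "\<zero>\<^bsub>R\<^esub> = 0" and one: "\<one>\<^bsub>R\<^esub> = 1"
    by (simp_all add: R_def ring_of_type_algebra_def)
  have units: "Units R = UNIV - {0}" by (simp add: field_Units carrier zero)
  have "x [^]\<^bsub>units_of R\<^esub> Coset.order (units_of R) = \<one>\<^bsub>units_of R\<^esub>"
    using False by (intro group.pow_order_eq_1 units_group) (simp add: units_of_carrier units)
  then have "x ^ (card (UNIV :: 'f set) - 1) = 1"
    using False
    by (simp add: units_of_pow units Coset.order_def units_of_carrier units_of_one one card_Diff_singleton)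
       (simp add: R_def nat_pow_ring_of_type_algebra)
  then have "x ^ Suc (card (UNIV :: 'f set) - 1) = x" by simp
  then show ?thesis using finite_UNIV_card_ge_0[where ?'a = 'f] by simp
qed (use finite_UNIV_card_ge_0[where ?'a = 'f] in simp)

text \<open>By Sylow's theorem a prime \<open>r\<close> dividing the field order gives an element of additive
  order \<open>r\<close>, so \<open>of_nat r = 0\<close>.\<close>

lemma prime_dvd_card_imp_eq_CHAR:
  assumes r: "prime r" and dvd: "r dvd card (UNIV :: 'f::{finite,field} set)"
  shows "r = CHAR('f)"
proof -
  define R where "R = (ring_of_type_algebra :: 'f ring)"
  interpret field R unfolding R_def by rule
  have carrier: "carrier R = UNIV" by (simp add: R_def ring_of_type_algebra_def)
  have "Coset.order (add_monoid R) = r ^ 1 * (card (UNIV :: 'f set) div r)"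
    using dvd by (simp add: Coset.order_def carrier R_def ring_of_type_algebra_def)
  then obtain H where H: "subgroup H (add_monoid R)" "card H = r ^ 1"
    by (metis sylow_thm[OF r a_group] finite carrier)
  interpret H: group "(add_monoid R)\<lparr>carrier := H\<rparr>"
    by (rule subgroup.subgroup_is_group[OF H(1) a_group])
  have "card {0::'f} < card H" using H(2) prime_gt_1_nat[OF r] by simp
  then obtain x where x: "x \<in> H" "x \<noteq> (0::'f)"
    by (metis card_mono finite insert_subset leD singletonI subsetI)
  have "x [^]\<^bsub>(add_monoid R)\<lparr>carrier := H\<rparr>\<^esub> r = one ((add_monoid R)\<lparr>carrier := H\<rparr>)"
    using H.pow_order_eq_1[of x] x(1) H(2) by (simp add: Coset.order_def)
  then have "of_nat r * x = 0"
    by (simp add: R_def ring_of_type_algebra_def nat_pow_additive_group)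
  then have "CHAR('f) dvd r" using x(2) by (simp add: of_nat_eq_0_iff_char_dvd)
  then show ?thesis
    using prime_CHAR_finite_field[where 'f='f] r by (metis primes_dvd_imp_eq)
qed

lemma eq_prime_power_if_prime_divisors_eq:
  fixes n p :: nat
  assumes "0 < n" and "\<And>r. prime r \<Longrightarrow> r dvd n \<Longrightarrow> r = p"
  shows "\<exists>e. n = p ^ e"
  using assms
proof (induction n rule: less_induct)
  case (less n)
  show ?case
  proof (cases "n = 1")
    case True
    then show ?thesis by (intro exI[of _ 0]) simp
  next
    case False
    then obtain r where r: "prime r" "r dvd n" using prime_factor_nat by blast
    then have "p dvd n" using less.prems(2) by simp
    then obtain n' where n': "n = p * n'" by blast
    have "prime p" using r less.prems(2) by simp
    then have "n' < n" "0 < n'" using n' less.prems(1) prime_gt_1_nat[of p] by auto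
    then obtain e where "n' = p ^ e" using less.IH less.prems(2) n' by force
    then show ?thesis using n' by (intro exI[of _ "Suc e"]) simp
  qed
qed

section \<open>Counting lemmas\<close>

lemma card_le_card_image_mult_fibres:
  assumes "finite B" and "f ` A \<subseteq> B" and "\<And>b. b \<in> B \<Longrightarrow> card {a \<in> A. f a = b} \<le> k"
  shows "card A \<le> card B * k"
proof -
  have "A = (\<Union>b\<in>B. {a \<in> A. f a = b})" using assms(2) by blast
  then have "card A \<le> (\<Sum>b\<in>B. card {a \<in> A. f a = b})"
    using card_UN_le[OF assms(1), of "\<lambda>b. {a \<in> A. f a = b}"] by simp
  also have "\<dots> \<le> (\<Sum>b\<in>B. k)" by (rule sum_mono) (rule assms(3))
  finally show ?thesis by simp
qed

lemma card_le_card_image_mult_kernel: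
  fixes f :: "'a::{finite,ab_group_add} \<Rightarrow> 'b::ab_group_add"
  assumes diff: "\<And>x y. f (x - y) = f x - f y" and "finite B" and "f ` A \<subseteq> B"
  shows "card A \<le> card B * card {z. f z = 0}"
proof (rule card_le_card_image_mult_fibres[OF assms(2,3)])
  fix b
  show "card {a \<in> A. f a = b} \<le> card {z. f z = 0}"
  proof (cases "\<exists>a0\<in>A. f a0 = b")
    case True
    then obtain a0 where a0: "a0 \<in> A" "f a0 = b" by blast
    have "{a \<in> A. f a = b} \<subseteq> (+) a0 ` {z. f z = 0}"
    proof
      fix a assume "a \<in> {a \<in> A. f a = b}"
      then have "f (a - a0) = 0" using a0 diff by simp
      then show "a \<in> (+) a0 ` {z. f z = 0}" by (intro rev_image_eqI[of "a - a0"]) auto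
    qed
    then have "card {a \<in> A. f a = b} \<le> card ((+) a0 ` {z. f z = 0})" by (intro card_mono) auto
    also have "\<dots> \<le> card {z. f z = 0}" by (rule card_image_le) auto
    finally show ?thesis .
  next
    case False
    then have "{a \<in> A. f a = b} = {}" by blast
    then show ?thesis by (metis card.empty zero_le)
  qed
qed

lemma card_linearized_poly_roots_le:
  fixes w :: "nat \<Rightarrow> 'a::field"
  assumes q: "2 \<le> q" and "j0 < K" "w j0 \<noteq> 0"
  shows "card {x. (\<Sum>j<K. w j * x ^ (q ^ j)) = 0} \<le> q ^ (K - 1)"
proof -
  define P where "P = (\<Sum>j<K. monom (w j) (q ^ j))"
  have "inj (\<lambda>j::nat. q ^ j)" using q by (intro injI) (simp add: power_inject_exp)
  then have "coeff P (q ^ j0) = w j0"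
    using assms(2) by (simp add: P_def coeff_sum coeff_monom inj_eq if_distrib cong: if_cong)
  then have "P \<noteq> 0" using assms(3) by auto
  have "degree P \<le> q ^ (K - 1)"
    unfolding P_def using q
    by (intro degree_sum_le order.trans[OF degree_monom_le] power_increasing) auto
  have "{x. (\<Sum>j<K. w j * x ^ (q ^ j)) = 0} = {x. poly P x = 0}"
    by (simp add: P_def poly_sum poly_monom)
  also have "card \<dots> \<le> degree P" by (rule card_poly_roots_bound[OF \<open>P \<noteq> 0\<close>])
  finally show ?thesis using \<open>degree P \<le> _\<close> by simp
qed

section \<open>The subfield \<open>Fq\<close> and \<open>Fq\<close>-spans\<close>

lemma Fq_power_q_power:
  assumes "(x::'f::field) \<in> Fq q"
  shows "x ^ (q ^ j) = x"
proof (induction j)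
  case (Suc j)
  have "x ^ (q ^ Suc j) = (x ^ (q ^ j)) ^ q" by (simp add: power_mult[symmetric] mult.commute)
  then show ?case using Suc assms by (simp add: Fq_def)
qed simp

definition Fq_span :: "nat \<Rightarrow> 'f::field set \<Rightarrow> 'f set" where
  "Fq_span q W = {v. \<exists>c. (\<forall>w\<in>W. c w \<in> Fq q) \<and> v = (\<Sum>w\<in>W. c w * w)}"

context
  fixes q N :: nat
  assumes card_field: "card (UNIV :: 'f::{finite,field} set) = q ^ N" and N_pos: "0 < N"
begin

lemma q_CHAR_power: "\<exists>e. q = CHAR('f) ^ e"
proof (rule eq_prime_power_if_prime_divisors_eq)
  show "0 < q" using card_field N_pos finite_UNIV_card_ge_0[where ?'a = 'f] by (cases "q = 0") auto
  fix r assume "prime r" "r dvd q"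
  then have "r dvd card (UNIV :: 'f set)" using card_field N_pos by (metis dvd_power dvd_trans)
  then show "r = CHAR('f)" by (rule prime_dvd_card_imp_eq_CHAR[OF \<open>prime r\<close>])
qed

lemma two_le_q: "2 \<le> q"
proof (rule ccontr)
  assume "\<not> 2 \<le> q"
  then have "q = 0 \<or> q = 1" by auto
  then have "q ^ N \<le> 1" using N_pos by (auto simp: power_0_left)
  moreover have "card {0::'f, 1} \<le> card (UNIV :: 'f set)" by (rule card_mono) auto
  ultimately show False using card_field by simp
qed

lemma frobenius_add: "((x::'f) + y) ^ (q ^ j) = x ^ (q ^ j) + y ^ (q ^ j)"
proof -
  obtain e where "q ^ j = CHAR('f) ^ (e * j)" using q_CHAR_power by (auto simp: power_mult)
  then show ?thesis by (rule freshmans_dream'[OF prime_CHAR_finite_field])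
qed

lemma frobenius_sum: "(\<Sum>i\<in>I. h i :: 'f) ^ (q ^ j) = (\<Sum>i\<in>I. h i ^ (q ^ j))"
  using two_le_q by (induction I rule: infinite_finite_induct) (auto simp: frobenius_add)

lemma frobenius_diff: "((x::'f) - y) ^ (q ^ j) = x ^ (q ^ j) - y ^ (q ^ j)"
  using frobenius_add[of "x - y" y j] by (simp add: eq_diff_eq)

lemma Fq_zero: "(0::'f) \<in> Fq q"
  using two_le_q by (simp add: Fq_def)

lemma Fq_one: "(1::'f) \<in> Fq q"
  by (simp add: Fq_def)

lemma Fq_add: "(x::'f) \<in> Fq q \<Longrightarrow> y \<in> Fq q \<Longrightarrow> x + y \<in> Fq q"
  using frobenius_add[of x y 1] by (simp add: Fq_def)

lemma Fq_diff: "(x::'f) \<in> Fq q \<Longrightarrow> y \<in> Fq q \<Longrightarrow> x - y \<in> Fq q"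
  using frobenius_diff[of x y 1] by (simp add: Fq_def)

lemma Fq_mult: "(x::'f) \<in> Fq q \<Longrightarrow> y \<in> Fq q \<Longrightarrow> x * y \<in> Fq q"
  by (simp add: Fq_def power_mult_distrib)

text \<open>The map \<open>x \<mapsto> x ^ q - x\<close> has kernel \<open>Fq q\<close> and lands in the kernel of the trace
  \<open>y \<mapsto> \<Sum>j<N. y ^ (q ^ j)\<close>, a linearized polynomial with at most \<open>q ^ (N - 1)\<close> roots.\<close>

lemma q_le_card_Fq: "q \<le> card (Fq q :: 'f set)"
proof -
  define \<phi> :: "'f \<Rightarrow> 'f" where "\<phi> x = x ^ q - x" for x
  define T :: "'f set" where "T = {y. (\<Sum>j<N. 1 * y ^ (q ^ j)) = 0}"
  have "\<phi> x \<in> T" for x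
  proof -
    have "(\<Sum>j<N. 1 * \<phi> x ^ (q ^ j)) = (\<Sum>j<N. x ^ (q ^ Suc j) - x ^ (q ^ j))"
      unfolding \<phi>_def
      by (intro sum.cong refl) (simp add: frobenius_diff power_mult[symmetric] mult.commute)
    also have "\<dots> = x ^ (q ^ N) - x" by (subst sum_lessThan_telescope) simp
    also have "\<dots> = 0" using finite_field_power_card[of x] card_field by simp
    finally show ?thesis by (simp add: T_def)
  qed
  then have "card (UNIV :: 'f set) \<le> card T * card {z. \<phi> z = 0}"
    by (intro card_le_card_image_mult_kernel) (auto simp: \<phi>_def frobenius_diff[of _ _ 1, simplified])
  also have "\<dots> \<le> q ^ (N - 1) * card {z. \<phi> z = 0}"
    unfolding T_def using two_le_q N_pos
    by (intro mult_right_mono card_linearized_poly_roots_le[of q 0]) auto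
  also have "{z. \<phi> z = 0} = Fq q" by (simp add: \<phi>_def Fq_def)
  finally have "q ^ N \<le> q ^ (N - 1) * card (Fq q :: 'f set)"
    using card_field by simp
  moreover have "q ^ N = q ^ (N - 1) * q" using N_pos by (cases N) auto
  ultimately show ?thesis using two_le_q by simp
qed

lemma Fq_span_zero: "(0::'f) \<in> Fq_span q W"
  unfolding Fq_span_def using Fq_zero by (intro CollectI exI[of _ "\<lambda>_. 0"]) auto

lemma Fq_span_add:
  assumes "(a::'f) \<in> Fq_span q W" and "b \<in> Fq_span q W"
  shows "a + b \<in> Fq_span q W"
proof -
  obtain c c' where "\<forall>w\<in>W. c w \<in> Fq q" "a = (\<Sum>w\<in>W. c w * w)"
    and "\<forall>w\<in>W. c' w \<in> Fq q" "b = (\<Sum>w\<in>W. c' w * w)"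
    using assms unfolding Fq_span_def by blast
  then show ?thesis unfolding Fq_span_def
    by (intro CollectI exI[of _ "\<lambda>w. c w + c' w"]) (auto intro: Fq_add simp: sum.distrib distrib_right)
qed

lemma Fq_span_diff:
  assumes "(a::'f) \<in> Fq_span q W" and "b \<in> Fq_span q W"
  shows "a - b \<in> Fq_span q W"
proof -
  obtain c c' where "\<forall>w\<in>W. c w \<in> Fq q" "a = (\<Sum>w\<in>W. c w * w)"
    and "\<forall>w\<in>W. c' w \<in> Fq q" "b = (\<Sum>w\<in>W. c' w * w)"
    using assms unfolding Fq_span_def by blast
  then show ?thesis unfolding Fq_span_def
    by (intro CollectI exI[of _ "\<lambda>w. c w - c' w"])
       (auto intro: Fq_diff simp: sum_subtractf left_diff_distrib)
qed

lemma Fq_span_smult: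
  assumes "(a::'f) \<in> Fq_span q W" and "r \<in> Fq q"
  shows "r * a \<in> Fq_span q W"
proof -
  obtain c where "\<forall>w\<in>W. c w \<in> Fq q" "a = (\<Sum>w\<in>W. c w * w)"
    using assms unfolding Fq_span_def by blast
  then show ?thesis unfolding Fq_span_def using assms(2)
    by (intro CollectI exI[of _ "\<lambda>w. r * c w"]) (auto intro: Fq_mult simp: sum_distrib_left mult.assoc)
qed

lemma Fq_span_sum: "(\<And>i. i \<in> I \<Longrightarrow> (h i :: 'f) \<in> Fq_span q W) \<Longrightarrow> (\<Sum>i\<in>I. h i) \<in> Fq_span q W"
  by (induction I rule: infinite_finite_induct) (auto intro: Fq_span_zero Fq_span_add)

lemma Fq_span_mono:
  assumes "W \<subseteq> W'" and "(a::'f) \<in> Fq_span q W"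
  shows "a \<in> Fq_span q W'"
proof -
  obtain c where c: "\<forall>w\<in>W. c w \<in> Fq q" "a = (\<Sum>w\<in>W. c w * w)"
    using assms(2) unfolding Fq_span_def by blast
  define c' where "c' w = (if w \<in> W then c w else 0)" for w
  have "(\<Sum>w\<in>W'. c' w * w) = (\<Sum>w\<in>W. c' w * w)"
    using assms(1) by (intro sum.mono_neutral_right) (auto simp: c'_def)
  then have "a = (\<Sum>w\<in>W'. c' w * w)" using c(2) by (simp add: c'_def)
  then show ?thesis unfolding Fq_span_def using c(1) Fq_zero
    by (intro CollectI exI[of _ c']) (auto simp: c'_def)
qed

lemma Fq_span_base:
  assumes "(w::'f) \<in> W"
  shows "w \<in> Fq_span q W"
proof -
  have "(\<Sum>v\<in>W. (if v = w then 1 else 0) * v) = (\<Sum>v\<in>W. if v = w then w else 0)"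
    by (intro sum.cong) auto
  then have "w = (\<Sum>v\<in>W. (if v = w then 1 else 0) * v)" using assms by simp
  then show ?thesis unfolding Fq_span_def using Fq_zero Fq_one
    by (intro CollectI exI[of _ "\<lambda>v. if v = w then 1 else 0"]) auto
qed

lemma card_Fq_span_le: "card (Fq_span q (W::'f set)) \<le> card (Fq q :: 'f set) ^ card W"
proof -
  have "Fq_span q W \<subseteq> (\<lambda>c. \<Sum>w\<in>W. c w * w) ` PiE W (\<lambda>_. Fq q)"
  proof
    fix v assume "v \<in> Fq_span q W"
    then obtain c where c: "\<forall>w\<in>W. c w \<in> Fq q" "v = (\<Sum>w\<in>W. c w * w)"
      unfolding Fq_span_def by blast
    then show "v \<in> (\<lambda>c. \<Sum>w\<in>W. c w * w) ` PiE W (\<lambda>_. Fq q)"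
      by (intro rev_image_eqI[of "restrict c W"]) auto
  qed
  then have "card (Fq_span q W) \<le> card ((\<lambda>c. \<Sum>w\<in>W. c w * w) ` PiE W (\<lambda>_. Fq q))"
    by (intro card_mono) auto
  also have "\<dots> \<le> card (PiE W (\<lambda>_. Fq q :: 'f set))"
    by (rule card_image_le) (simp add: finite_PiE)
  also have "\<dots> = card (Fq q :: 'f set) ^ card W" by (simp add: card_PiE)
  finally show ?thesis .
qed

lemma card_Fq_combinations:
  assumes "Fq_indep q m (g :: nat \<Rightarrow> 'f)"
  shows "card ((\<lambda>c. \<Sum>r<m. c r * g r) ` PiE {..<m} (\<lambda>_. Fq q)) = card (Fq q :: 'f set) ^ m"
proof -
  have "inj_on (\<lambda>c. \<Sum>r<m. c r * g r) (PiE {..<m} (\<lambda>_. Fq q))"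
  proof (rule inj_onI)
    fix c c' assume c: "c \<in> PiE {..<m} (\<lambda>_. Fq q)" "c' \<in> PiE {..<m} (\<lambda>_. Fq q)"
      and eq: "(\<Sum>r<m. c r * g r) = (\<Sum>r<m. c' r * g r)"
    have "(\<Sum>r<m. (c r - c' r) * g r) = 0"
      using eq by (simp add: left_diff_distrib sum_subtractf)
    moreover have "\<forall>r<m. c r - c' r \<in> Fq q" using c by (auto intro: Fq_diff)
    ultimately have "\<forall>r<m. c r - c' r = 0"
      using assms[unfolded Fq_indep_def, THEN spec[of _ "\<lambda>r. c r - c' r"]] by blast
    then show "c = c'" using c by (intro PiE_ext) auto
  qed
  then show ?thesis by (simp add: card_image card_PiE)
qed

lemma linearized_Fq_combination:
  fixes w g :: "nat \<Rightarrow> 'f"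
  assumes "\<And>r. r < m \<Longrightarrow> c r \<in> Fq q"
  shows "(\<Sum>j<K. w j * (\<Sum>r<m. c r * g r) ^ (q ^ j)) = (\<Sum>r<m. c r * (\<Sum>j<K. w j * g r ^ (q ^ j)))"
proof -
  have "(\<Sum>r<m. c r * g r) ^ (q ^ j) = (\<Sum>r<m. c r * g r ^ (q ^ j))" for j
    unfolding frobenius_sum using assms
    by (intro sum.cong) (simp_all add: power_mult_distrib Fq_power_q_power)
  then have "(\<Sum>j<K. w j * (\<Sum>r<m. c r * g r) ^ (q ^ j)) = (\<Sum>j<K. w j * (\<Sum>r<m. c r * g r ^ (q ^ j)))"
    by simp
  also have "\<dots> = (\<Sum>j<K. \<Sum>r<m. c r * (w j * g r ^ (q ^ j)))"
    by (simp add: sum_distrib_left mult.left_commute)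
  also have "\<dots> = (\<Sum>r<m. c r * (\<Sum>j<K. w j * g r ^ (q ^ j)))"
    by (subst sum.swap) (simp add: sum_distrib_left)
  finally show ?thesis .
qed

section \<open>Gabidulin codes and the storage system\<close>

text \<open>For \<open>w \<noteq> 0\<close> the linearized polynomial with
  coefficients \<open>w\<close> would map all \<open>s ^ m\<close> \<open>Fq\<close>-combinations of the \<open>g r\<close> into an \<open>Fq_span\<close> of
  at most \<open>m - K\<close> elements, so its kernel would need more than the \<open>q ^ (K - 1)\<close> roots it can have.\<close>

lemma gab_enc_eq_0_if_Fq_span:
  fixes g w :: "nat \<Rightarrow> 'f"
  assumes g: "Fq_indep q m g" and W: "card W \<le> m - K" and "K \<le> m"
    and span: "\<forall>r<m. gab_enc q K g w r \<in> Fq_span q W"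
  shows "\<forall>j<K. w j = 0"
proof (rule ccontr)
  assume "\<not> (\<forall>j<K. w j = 0)"
  then obtain j0 where j0: "j0 < K" "w j0 \<noteq> 0" by blast
  define s where "s = card (Fq q :: 'f set)"
  define L where "L y = (\<Sum>j<K. w j * y ^ (q ^ j))" for y :: 'f
  define V where "V = (\<lambda>c. \<Sum>r<m. c r * g r) ` PiE {..<m} (\<lambda>_. Fq q)"
  have "L ` V \<subseteq> Fq_span q W"
  proof
    fix y assume "y \<in> L ` V"
    then obtain c where c: "c \<in> PiE {..<m} (\<lambda>_. Fq q)" "y = L (\<Sum>r<m. c r * g r)"
      unfolding V_def by blast
    moreover have "\<And>r. r < m \<Longrightarrow> c r \<in> Fq q" using c(1) by auto
    ultimately have "y = (\<Sum>r<m. c r * gab_enc q K g w r)"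
      by (simp add: L_def linearized_Fq_combination gab_enc_def)
    then show "y \<in> Fq_span q W"
      using c(1) span by (auto intro!: Fq_span_sum Fq_span_smult)
  qed
  moreover have "L (x - y) = L x - L y" for x y
    by (simp add: L_def frobenius_diff right_diff_distrib sum_subtractf)
  ultimately have "card V \<le> card (Fq_span q W) * card {z. L z = 0}"
    by (intro card_le_card_image_mult_kernel) auto
  also have "\<dots> \<le> s ^ (m - K) * q ^ (K - 1)"
  proof (rule mult_mono)
    have "s ^ card W \<le> s ^ (m - K)"
      using W two_le_q q_le_card_Fq unfolding s_def by (intro power_increasing) auto
    then show "card (Fq_span q W) \<le> s ^ (m - K)"
      using card_Fq_span_le[of W] unfolding s_def by linarith
    show "card {z. L z = 0} \<le> q ^ (K - 1)"
      unfolding L_def using two_le_q j0 by (rule card_linearized_poly_roots_le)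
  qed simp_all
  also have "\<dots> \<le> s ^ (m - K) * s ^ (K - 1)"
    using q_le_card_Fq unfolding s_def by (intro mult_left_mono power_mono) auto
  also have "\<dots> = s ^ (m - 1)" using j0 \<open>K \<le> m\<close> by (simp flip: power_add)
  also have "\<dots> < s ^ m"
    using two_le_q q_le_card_Fq j0 \<open>K \<le> m\<close> unfolding s_def by (intro power_strict_increasing) auto
  finally show False using card_Fq_combinations[OF g] by (simp add: V_def s_def)
qed

lemma arr_enc_in_Fq_span:
  assumes G: "\<forall>r<k * \<alpha>. \<forall>s<n * \<alpha>. G r s \<in> Fq q" and j: "j < n" and a: "a < \<alpha>"
    and c: "\<forall>r<k * \<alpha>. (c r :: 'f) \<in> Fq_span q W"
  shows "arr_enc \<alpha> k G c j a \<in> Fq_span q W"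
proof -
  have "j * \<alpha> + a < Suc j * \<alpha>" using a by simp
  also have "\<dots> \<le> n * \<alpha>" using j by (intro mult_right_mono) auto
  finally have "\<And>r. r < k * \<alpha> \<Longrightarrow> G r (j * \<alpha> + a) \<in> Fq q" using G by blast
  then have "(\<Sum>r<k * \<alpha>. G r (j * \<alpha> + a) * c r) \<in> Fq_span q W"
    using c by (intro Fq_span_sum Fq_span_smult) auto
  then show ?thesis unfolding arr_enc_def by (simp add: mult.commute)
qed

text \<open>Counting: the encoding map is injective on \<open>Fq_span\<close>-valued data, and the data and the
  contents of \<open>k\<close> nodes both consist of \<open>k * \<alpha>\<close> symbols, so every \<open>Fq_span\<close>-valued content of
  those nodes is the encoding of \<open>Fq_span\<close>-valued data.\<close>

lemma MDS_array_data_in_Fq_span: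
  assumes G: "\<forall>r<k * \<alpha>. \<forall>s<n * \<alpha>. G r s \<in> Fq q" and mds: "MDS_array n k \<alpha> G"
    and S: "S \<subseteq> {..<n}" "card S = k"
    and nodes: "\<forall>j\<in>S. \<forall>a<\<alpha>. arr_enc \<alpha> k G (c :: nat \<Rightarrow> 'f) j a \<in> Fq_span q W"
  shows "\<forall>r<k * \<alpha>. c r \<in> Fq_span q W"
proof -
  define Data where "Data = PiE {..<k * \<alpha>} (\<lambda>_. Fq_span q W)"
  define Nodes where "Nodes = PiE (S \<times> {..<\<alpha>}) (\<lambda>_. Fq_span q W)"
  define enc where "enc c = restrict (\<lambda>(j, a). arr_enc \<alpha> k G c j a) (S \<times> {..<\<alpha>})" for c
  have decode: "\<forall>r<k * \<alpha>. c r = c' r" if "enc c = enc c'" for c c'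
  proof -
    have "arr_enc \<alpha> k G c j a = arr_enc \<alpha> k G c' j a" if "j \<in> S" "a < \<alpha>" for j a
      using fun_cong[OF \<open>enc c = enc c'\<close>, of "(j, a)"] that by (simp add: enc_def)
    then show ?thesis using mds S unfolding MDS_array_def by blast
  qed
  have "enc ` Data \<subseteq> Nodes"
  proof
    fix y assume "y \<in> enc ` Data"
    then obtain c' where c': "c' \<in> Data" "y = enc c'" by blast
    have "arr_enc \<alpha> k G c' j a \<in> Fq_span q W" if "j \<in> S" "a < \<alpha>" for j a
      using c'(1) that S(1) by (intro arr_enc_in_Fq_span[OF G]) (auto simp: Data_def)
    then show "y \<in> Nodes" by (auto simp: c'(2) enc_def Nodes_def)
  qed
  moreover have "inj_on enc Data"
  proof (rule inj_onI)
    fix c c' assume "c \<in> Data" "c' \<in> Data" "enc c = enc c'"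
    then show "c = c'" using decode[of c c'] by (intro PiE_ext[of c "{..<k * \<alpha>}"]) (auto simp: Data_def)
  qed
  moreover have "card Data = card Nodes"
    using S finite_subset[OF S(1)] by (simp add: Data_def Nodes_def card_PiE card_cartesian_product)
  ultimately have "enc ` Data = Nodes"
    by (intro card_subset_eq) (simp_all add: card_image Nodes_def finite_PiE finite_subset[OF S(1)])
  moreover have "enc c \<in> Nodes" using nodes by (auto simp: Nodes_def enc_def)
  ultimately obtain c' where "c' \<in> Data" "enc c' = enc c" by (metis imageE)
  then show ?thesis using decode[of c' c] unfolding Data_def by (metis PiE_mem lessThan_iff)
qed

text \<open>Since repairs are \<open>Fq\<close>-linear and exact on codewords, the deviation of every node from
  the codeword stays in the \<open>Fq\<close>-span of the injected error symbols; each attacked node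
  contributes at most \<open>\<alpha>\<close> of them.\<close>

lemma reach_deviation_in_Fq_span:
  assumes rep: "opt_repair q n k \<alpha> d \<beta> G Sdl Rec"
    and "reach n d \<alpha> \<beta> Sdl Rec (arr_enc \<alpha> k G (c :: nat \<Rightarrow> 'f)) x A"
  shows "finite A \<and> (\<exists>W. card W \<le> card A * \<alpha> \<and>
           (\<forall>j a. a < \<alpha> \<longrightarrow> x j a - arr_enc \<alpha> k G c j a \<in> Fq_span q W))"
  using assms(2)
proof (induction rule: reach.induct)
  case init
  then show ?case using Fq_span_zero by (intro conjI exI[of _ "{}"]) auto
next
  case (inject x A j e)
  from inject.IH obtain W where W: "finite A" "card W \<le> card A * \<alpha>"
    "\<forall>j a. a < \<alpha> \<longrightarrow> x j a - arr_enc \<alpha> k G c j a \<in> Fq_span q W" by blast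
  define W' where "W' = W \<union> e ` {..<\<alpha>}"
  have "card W' \<le> card W + card (e ` {..<\<alpha>})" unfolding W'_def by (rule card_Un_le)
  also have "\<dots> \<le> card A * \<alpha> + \<alpha>" using W(2) card_image_le[of "{..<\<alpha>}" e] by simp
  also have "\<dots> = card (insert j A) * \<alpha>" using W(1) inject.hyps(3) by simp
  finally have card_W': "card W' \<le> card (insert j A) * \<alpha>" .
  have updated: "(x(j := (\<lambda>a. x j a + e a))) j' a - arr_enc \<alpha> k G c j' a \<in> Fq_span q W'"
    if "a < \<alpha>" for j' a
  proof -
    have "x j' a - arr_enc \<alpha> k G c j' a \<in> Fq_span q W" using W(3) that by blast
    then have dev: "x j' a - arr_enc \<alpha> k G c j' a \<in> Fq_span q W'"
      by (rule Fq_span_mono[rotated]) (simp add: W'_def)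
    show ?thesis
    proof (cases "j' = j")
      case True
      have "e a \<in> Fq_span q W'" using that by (intro Fq_span_base) (simp add: W'_def)
      then have "(x j' a - arr_enc \<alpha> k G c j' a) + e a \<in> Fq_span q W'" by (rule Fq_span_add[OF dev])
      then show ?thesis using True by (simp add: diff_add_eq)
    next
      case False
      then show ?thesis using dev by simp
    qed
  qed
  show ?case using W(1) card_W' updated by (intro conjI exI[of _ W']) auto
next
  case (repair x A i D)
  from repair.IH obtain W where W: "finite A" "card W \<le> card A * \<alpha>"
    "\<forall>j a. a < \<alpha> \<longrightarrow> x j a - arr_enc \<alpha> k G c j a \<in> Fq_span q W" by blast
  have repaired: "repair_out \<alpha> \<beta> Sdl Rec i D x a - arr_enc \<alpha> k G c i a \<in> Fq_span q W"
    if "a < \<alpha>" for a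
  proof -
    have "repair_out \<alpha> \<beta> Sdl Rec i D (arr_enc \<alpha> k G c) a = arr_enc \<alpha> k G c i a"
      using rep repair.hyps that unfolding opt_repair_def by blast
    then have "repair_out \<alpha> \<beta> Sdl Rec i D x a - arr_enc \<alpha> k G c i a =
        (\<Sum>h\<in>D. \<Sum>l<\<beta>. Rec i D h a l * (\<Sum>b<\<alpha>. Sdl i D h l b * (x h b - arr_enc \<alpha> k G c h b)))"
      unfolding repair_out_def by (simp add: right_diff_distrib sum_subtractf)
    also have "\<dots> \<in> Fq_span q W"
      using rep W(3) unfolding opt_repair_def by (intro Fq_span_sum Fq_span_smult) auto
    finally show ?thesis .
  qed
  have "(x(i := repair_out \<alpha> \<beta> Sdl Rec i D x)) j a - arr_enc \<alpha> k G c j a \<in> Fq_span q W"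
    if "a < \<alpha>" for j a
    using repaired[OF that] W(3) that by (cases "j = i") auto
  then show ?case using W by (intro conjI exI[of _ W]) auto
qed

lemma observation_determines_message:
  assumes g: "Fq_indep q (k * \<alpha>) (g :: nat \<Rightarrow> 'f)" and "K \<le> k * \<alpha>"
    and G: "\<forall>r<k * \<alpha>. \<forall>s<n * \<alpha>. G r s \<in> Fq q" and mds: "MDS_array n k \<alpha> G"
    and rep: "opt_repair q n k \<alpha> d \<beta> G Sdl Rec"
    and S: "S \<subseteq> {..<n}" "card S = k"
    and x: "reach n d \<alpha> \<beta> Sdl Rec (arr_enc \<alpha> k G (gab_enc q K g u)) x A"
    and x': "reach n d \<alpha> \<beta> Sdl Rec (arr_enc \<alpha> k G (gab_enc q K g u')) x' A'"
    and few_errors: "(card A + card A') * \<alpha> \<le> k * \<alpha> - K"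
    and same: "\<forall>j\<in>S. \<forall>a<\<alpha>. x j a = x' j a"
  shows "\<forall>i<K. u i = u' i"
proof -
  let ?c = "gab_enc q K g u" and ?c' = "gab_enc q K g u'"
  obtain W where W: "card W \<le> card A * \<alpha>"
    "\<forall>j a. a < \<alpha> \<longrightarrow> x j a - arr_enc \<alpha> k G ?c j a \<in> Fq_span q W"
    using reach_deviation_in_Fq_span[OF rep x] by blast
  obtain W' where W': "card W' \<le> card A' * \<alpha>"
    "\<forall>j a. a < \<alpha> \<longrightarrow> x' j a - arr_enc \<alpha> k G ?c' j a \<in> Fq_span q W'"
    using reach_deviation_in_Fq_span[OF rep x'] by blast
  have "card (W \<union> W') \<le> k * \<alpha> - K"
    using card_Un_le[of W W'] W(1) W'(1) few_errors by (simp add: add_mult_distrib)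
  have "arr_enc \<alpha> k G (\<lambda>r. ?c r - ?c' r) j a \<in> Fq_span q (W \<union> W')" if "j \<in> S" "a < \<alpha>" for j a
  proof -
    have "x' j a - arr_enc \<alpha> k G ?c' j a \<in> Fq_span q (W \<union> W')"
      using W'(2) that by (blast intro: Fq_span_mono[OF Un_upper2])
    moreover have "x j a - arr_enc \<alpha> k G ?c j a \<in> Fq_span q (W \<union> W')"
      using W(2) that by (blast intro: Fq_span_mono[OF Un_upper1])
    ultimately have "(x' j a - arr_enc \<alpha> k G ?c' j a) - (x j a - arr_enc \<alpha> k G ?c j a)
        \<in> Fq_span q (W \<union> W')" by (rule Fq_span_diff)
    then show ?thesis
      using same that by (simp add: arr_enc_def left_diff_distrib sum_subtractf)
  qed
  then have "\<forall>r<k * \<alpha>. ?c r - ?c' r \<in> Fq_span q (W \<union> W')"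
    using MDS_array_data_in_Fq_span[OF G mds S] by blast
  moreover have "?c r - ?c' r = gab_enc q K g (\<lambda>j. u j - u' j) r" for r
    by (simp add: gab_enc_def left_diff_distrib sum_subtractf)
  ultimately have "\<forall>r<k * \<alpha>. gab_enc q K g (\<lambda>j. u j - u' j) r \<in> Fq_span q (W \<union> W')"
    by simp
  then have "\<forall>j<K. u j - u' j = 0"
    by (rule gab_enc_eq_0_if_Fq_span[OF g \<open>card (W \<union> W') \<le> _\<close> \<open>K \<le> k * \<alpha>\<close>])
  then show ?thesis by simp
qed

end

theorem theorem1:
  fixes q N K m \<alpha> k n d \<beta> t :: nat
    and g :: "nat \<Rightarrow> 'f::{finite,field}"
    and G :: "nat \<Rightarrow> nat \<Rightarrow> 'f"
    and Sdl Rec :: "nat \<Rightarrow> nat set \<Rightarrow> nat \<Rightarrow> nat \<Rightarrow> nat \<Rightarrow> 'f"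
  assumes card_field: "card (UNIV :: 'f set) = q ^ N"
    and KN: "K < N" and KM: "K \<le> m" and mN: "m \<le> N"
    and pos: "0 < \<alpha>" "0 < k"
    and m_eq: "m = \<alpha> * k"
    and g_indep: "Fq_indep q m g"
    and G_Fq: "\<forall>r<k * \<alpha>. \<forall>s<n * \<alpha>. G r s \<in> Fq q"
    and mds: "MDS_array n k \<alpha> G"
    and rep: "opt_repair q n k \<alpha> d \<beta> G Sdl Rec"
    and bound: "2 * t * \<alpha> + 1 \<le> m - K + 1"
  shows "\<exists>dec :: nat set \<Rightarrow> (nat \<Rightarrow> nat \<Rightarrow> 'f) \<Rightarrow> nat \<Rightarrow> 'f.
           \<forall>S u x A. S \<subseteq> {..<n} \<and> card S = k \<and>
             reach n d \<alpha> \<beta> Sdl Rec (arr_enc \<alpha> k G (gab_enc q K g u)) x A \<and> card A = t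
             \<longrightarrow> (\<forall>i<K. dec S (\<lambda>j a. if j \<in> S \<and> a < \<alpha> then x j a else 0) i = u i)"
proof -
  have N: "0 < N" using KN by simp
  have g: "Fq_indep q (k * \<alpha>) g" and "K \<le> k * \<alpha>" and few_errors: "(t + t) * \<alpha> \<le> k * \<alpha> - K"
    using g_indep KM bound m_eq by (simp_all add: algebra_simps)
  define observe where "observe S x = (\<lambda>j a. if j \<in> S \<and> a < \<alpha> then x j a else 0)"
    for S and x :: "nat \<Rightarrow> nat \<Rightarrow> 'f"
  define consistent where "consistent S y u \<longleftrightarrow> (\<exists>x A.
      reach n d \<alpha> \<beta> Sdl Rec (arr_enc \<alpha> k G (gab_enc q K g u)) x A \<and> card A = t \<and> observe S x = y)"
    for S y u
  have "\<forall>i<K. (SOME u. consistent S (observe S x) u) i = u i"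
    if S: "S \<subseteq> {..<n}" "card S = k"
      and x: "reach n d \<alpha> \<beta> Sdl Rec (arr_enc \<alpha> k G (gab_enc q K g u)) x A" "card A = t"
    for S u x A
  proof -
    have "consistent S (observe S x) u" using x by (auto simp: consistent_def)
    then have "consistent S (observe S x) (SOME u. consistent S (observe S x) u)"
      by (rule someI[of "consistent S (observe S x)"])
    then obtain x' A' where x': "reach n d \<alpha> \<beta> Sdl Rec
        (arr_enc \<alpha> k G (gab_enc q K g (SOME u. consistent S (observe S x) u))) x' A'"
      "card A' = t" "observe S x' = observe S x"
      unfolding consistent_def by blast
    have "\<forall>j\<in>S. \<forall>a<\<alpha>. x' j a = x j a"
      using x'(3) unfolding observe_def by (metis (full_types))
    then show ?thesis
      using observation_determines_message[OF card_field N g \<open>K \<le> k * \<alpha>\<close> G_Fq mds rep S x'(1) x(1)]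
        few_errors x(2) x'(2) by simp
  qed
  then show ?thesis by (intro exI[of _ "\<lambda>S y. SOME u. consistent S y u"]) (auto simp: observe_def)
qed

end
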